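(* Assume the setting described in the context and that $u$ satisfies Assumption $( * )$. Let $T\in(t_0,\infty)$ and let $(y,w)$ be a solution of the integrated Maxey–Riley system on $[t_0,T)$ with initial condition $(y_0,w_0)$. Then there exist constants $C_Y,C_W$, depending on $T,y_0,w_0,\kappa,\mu$ and $L_b$, such that $\sup_{t\in[t_0,T)}|y(t)|\le C_Y$ and $\sup_{t\in[t_0,T)}|w(t)|\le C_W$.
   Context: Fix $n\ge 1$, a domain $\mathscr{D}\subseteq\mathbb{R}^n$, an initial time $t_0\ge 0$, a velocity field $u:\mathscr{D}\times[0,\infty)\to\mathbb{R}^n$, real constants $R,\mu,\kappa,\gamma>0$ and a constant vector $g\in\mathbb{R}^n$. Write $\frac{D}{Dt}=\partial_t+(u\cdot\nabla)$ and define $A_u,B_u:\mathscr{D}\times[t_0,\infty)\to\mathbb{R}^n$, $M_u:\mathscr{D}\times[t_0,\infty)\to\mathbb{R}^{n\times n}$ by $A_u=u+\frac{\gamma}{6}\mu^{-1}\Delta u$, $M_u=\nabla u+\frac{\gamma}{6}\mu^{-1}\nabla\Delta u$, $B_u=\left(\frac{3R}{2}-1\right)\left(\frac{Du}{Dt}-g\right)+\left(\frac{R}{20}-\frac16\right)\gamma\mu^{-1}\frac{D}{Dt}\Delta u-\frac{\gamma}{6}\mu^{-1}\left(\nabla u+\frac{\gamma}{6}\mu^{-1}\nabla\Delta u\right)\Delta u$. The integrated Maxey–Riley system is $y(t)=y_0+\int_{t_0}^t\big(w(s)+A_u(y(s),s)\big)\,ds$, $w(t)=w_0+\int_{t_0}^t\Big(-\mu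 w(s)-M_u(y(s),s)w(s)-\kappa\mu^{1/2}\frac{w(s)}{\sqrt{t-s}}+B_u(y(s),s)\Big)\,ds$. A solution on $[t_0,T)$ with initial condition $(y_0,w_0)$ is a pair of continuous maps $y:[t_0,T)\to\mathscr{D}$, $w:[t_0,T)\to\mathbb{R}^n$ satisfying both equations for every $t\in[t_0,T)$. Assumption $( * )$: $u$ is smooth enough that the first-order partial derivatives in time and space of $A_u$ and $B_u$ exist, are continuous, and are uniformly bounded in time and space, i.e. there is a constant $L_b$ with $\|\partial_tA_u\|_\infty,\|\nabla A_u\|_\infty,\|\partial_tB_u\|_\infty,\|\nabla B_u\|_\infty<L_b$. *)

theory Defs
  imports "HOL-Analysis.Analysis"
begin

definition pdx :: "'n::finite \<Rightarrow> (real^'n \<Rightarrow> 'b::real_normed_vector) \<Rightarrow> real^'n \<Rightarrow> 'b" where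
  "pdx i f x = vector_derivative (\<lambda>h. f (x + h *\<^sub>R axis i 1)) (at 0)"

definition pdt :: "(real^'n::finite \<Rightarrow> real \<Rightarrow> 'b::real_normed_vector) \<Rightarrow> real^'n \<Rightarrow> real \<Rightarrow> 'b" where
  "pdt f x t = vector_derivative (\<lambda>s. f x s) (at t within {0..})"

definition jac :: "(real^'n::finite \<Rightarrow> real^'n) \<Rightarrow> real^'n \<Rightarrow> real^'n^'n" where
  "jac f x = (\<chi> j k. pdx k f x $ j)"

definition lap :: "(real^'n::finite \<Rightarrow> real \<Rightarrow> real^'n) \<Rightarrow> real^'n \<Rightarrow> real \<Rightarrow> real^'n" where
  "lap u x t = (\<Sum>i\<in>UNIV. pdx i (\<lambda>z. pdx i (\<lambda>y. u y t) z) x)"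

definition matdt :: "(real^'n::finite \<Rightarrow> real \<Rightarrow> real^'n) \<Rightarrow> (real^'n \<Rightarrow> real \<Rightarrow> real^'n) \<Rightarrow> real^'n \<Rightarrow> real \<Rightarrow> real^'n" where
  "matdt u f x t = pdt f x t + jac (\<lambda>z. f z t) x *v u x t"

definition A_u :: "(real^'n::finite \<Rightarrow> real \<Rightarrow> real^'n) \<Rightarrow> real \<Rightarrow> real \<Rightarrow> real^'n \<Rightarrow> real \<Rightarrow> real^'n" where
  "A_u u \<gamma> \<mu> x t = u x t + (\<gamma> / 6 / \<mu>) *\<^sub>R lap u x t"

definition M_u :: "(real^'n::finite \<Rightarrow> real \<Rightarrow> real^'n) \<Rightarrow> real \<Rightarrow> real \<Rightarrow> real^'n \<Rightarrow> real \<Rightarrow> real^'n^'n" where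
  "M_u u \<gamma> \<mu> x t = jac (\<lambda>z. u z t) x + (\<gamma> / 6 / \<mu>) *\<^sub>R jac (\<lambda>z. lap u z t) x"

definition B_u :: "(real^'n::finite \<Rightarrow> real \<Rightarrow> real^'n) \<Rightarrow> real \<Rightarrow> real \<Rightarrow> real \<Rightarrow> real^'n \<Rightarrow> real^'n \<Rightarrow> real \<Rightarrow> real^'n" where
  "B_u u R \<gamma> \<mu> g x t =
     (3 * R / 2 - 1) *\<^sub>R (matdt u u x t - g)
   + ((R / 20 - 1 / 6) * \<gamma> / \<mu>) *\<^sub>R matdt u (lap u) x t
   - (\<gamma> / 6 / \<mu>) *\<^sub>R (M_u u \<gamma> \<mu> x t *v lap u x t)"

definition C1_bounded :: "(real^'n::finite \<Rightarrow> real \<Rightarrow> real^'n) \<Rightarrow> (real^'n) set \<Rightarrow> real \<Rightarrow> real \<Rightarrow> bool" where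
  "C1_bounded F D t0 Lb \<longleftrightarrow>
     (\<forall>x\<in>D. \<forall>t\<in>{t0..}.
        ((\<lambda>s. F x s) has_vector_derivative pdt F x t) (at t within {0..})
      \<and> (\<forall>i. ((\<lambda>h. F (x + h *\<^sub>R axis i 1) t) has_vector_derivative pdx i (\<lambda>z. F z t) x) (at 0))
      \<and> norm (pdt F x t) < Lb
      \<and> onorm (\<lambda>v. jac (\<lambda>z. F z t) x *v v) < Lb)
   \<and> continuous_on (D \<times> {t0..}) (\<lambda>(x, t). pdt F x t)
   \<and> (\<forall>i. continuous_on (D \<times> {t0..}) (\<lambda>(x, t). pdx i (\<lambda>z. F z t) x))"

definition assumption_star where
  "assumption_star u D t0 R \<mu> \<gamma> g Lb \<longleftrightarrow>
     C1_bounded (A_u u \<gamma> \<mu>) D t0 Lb \<and> C1_bounded (B_u u R \<gamma> \<mu> g) D t0 Lb"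

definition MR_solution ::
  "(real^'n::finite \<Rightarrow> real \<Rightarrow> real^'n) \<Rightarrow> (real^'n) set \<Rightarrow> real \<Rightarrow> real \<Rightarrow> real \<Rightarrow> real \<Rightarrow> real \<Rightarrow> real
   \<Rightarrow> real^'n \<Rightarrow> real^'n \<Rightarrow> real^'n \<Rightarrow> (real \<Rightarrow> real^'n) \<Rightarrow> (real \<Rightarrow> real^'n) \<Rightarrow> bool" where
  "MR_solution u D t0 T R \<mu> \<kappa> \<gamma> g y0 w0 y w \<longleftrightarrow>
     continuous_on {t0..<T} y \<and> continuous_on {t0..<T} w \<and> y ` {t0..<T} \<subseteq> D
   \<and> (\<forall>t\<in>{t0..<T}.
        ((\<lambda>s. w s + A_u u \<gamma> \<mu> (y s) s) has_integral (y t - y0)) {t0..t}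
      \<and> ((\<lambda>s. - \<mu> *\<^sub>R w s - M_u u \<gamma> \<mu> (y s) s *v w s
              - (\<kappa> * sqrt \<mu> / sqrt (t - s)) *\<^sub>R w s
              + B_u u R \<gamma> \<mu> g (y s) s) has_integral (w t - w0)) {t0..t})"

end

theory Submission
  imports Defs
begin

text \<open>
  Let \<phi> t = |w t| + |A_u (y t) t| + |B_u (y t) t| (state_norm below).  The first derivatives
  of A_u and B_u are bounded by L_b only on the open set D, but the trajectory y stays in D, so
  by compactness they are Lipschitz along it; as y' = w + A_u (y t) t, the maps
  t \<mapsto> A_u (y t) t and t \<mapsto> B_u (y t) t are Lipschitz on an interval with constant
  n L_b sup \<phi> + L_b.  The matrix M_u is bounded, so |w| obeys a Volterra inequality with the
  weakly singular kernel c_1 + \<kappa> sqrt \<mu> / sqrt (t - s), whose mass on an interval of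
  length d is c_1 d + 2 \<kappa> sqrt \<mu> sqrt d.  Hence for some \<delta> > 0 and all
  a \<le> t \<le> a + \<delta>
    \<phi> t \<le> C + E max[t0,a] \<phi> + 1/2 max[t0,t] \<phi>,
  and using this at the point where \<phi> attains its maximum on [t0,t] extends a bound for \<phi>
  on [t0,a] to [t0,a + \<delta>].  Finitely many such steps cover [t0,T), and finally
  |y t| \<le> |y0| + (T - t0) sup \<phi>.
\<close>

section \<open>Lipschitz bounds from bounded partial derivatives\<close>

lemma column_jac: "column i (jac f x) = pdx i f x"
  by (simp add: column_def jac_def vec_eq_iff)

lemma norm_diff_le_of_vector_derivative_bound:
  fixes f :: "real \<Rightarrow> 'a::real_normed_vector"
  assumes "convex S"
    and "\<And>s. s \<in> S \<Longrightarrow> (f has_vector_derivative f' s) (at s within S)"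
    and "\<And>s. s \<in> S \<Longrightarrow> norm (f' s) \<le> B"
    and "x \<in> S" "y \<in> S"
  shows "norm (f x - f y) \<le> B * \<bar>x - y\<bar>"
proof -
  have "norm (f x - f y) \<le> B * norm (x - y)"
  proof (rule differentiable_bound[where f'="\<lambda>s h. h *\<^sub>R f' s"])
    fix s assume "s \<in> S"
    then show "(f has_derivative (\<lambda>h. h *\<^sub>R f' s)) (at s within S)"
      using assms(2) by (simp add: has_vector_derivative_def)
    show "onorm (\<lambda>h. h *\<^sub>R f' s) \<le> B"
      using assms(3)[OF \<open>s \<in> S\<close>] by (simp add: onorm_scaleR_left[OF bounded_linear_ident] onorm_id)
  qed (use assms in auto)
  then show ?thesis by simp
qed

lemma C1_bounded_pos:
  assumes "C1_bounded F D t0 Lb" "x \<in> D" "t0 \<le> t"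
  shows "0 < Lb"
proof -
  have "norm (pdt F x t) < Lb"
    using assms unfolding C1_bounded_def by auto
  then show ?thesis by (meson le_less_trans norm_ge_zero)
qed

lemma C1_bounded_pdx_bound:
  assumes "C1_bounded F D t0 Lb" "x \<in> D" "t0 \<le> t"
  shows "norm (pdx i (\<lambda>z. F z t) x) < Lb"
proof -
  have "norm (pdx i (\<lambda>z. F z t) x) = norm (jac (\<lambda>z. F z t) x *v axis i 1)"
    by (simp add: matrix_vector_mult_basis column_jac)
  also have "\<dots> \<le> onorm (\<lambda>v. jac (\<lambda>z. F z t) x *v v) * norm (axis i (1::real))"
    by (rule onorm) simp
  also have "\<dots> < Lb"
    using assms unfolding C1_bounded_def by auto
  finally show ?thesis .
qed

lemma C1_bounded_lipschitz_time:
  assumes "C1_bounded F D t0 Lb" "0 \<le> t0" "x \<in> D" "t0 \<le> s" "t0 \<le> s'"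
  shows "norm (F x s' - F x s) \<le> Lb * \<bar>s' - s\<bar>"
proof (rule norm_diff_le_of_vector_derivative_bound[where S="{t0..}" and f'="pdt F x"])
  fix r :: real assume "r \<in> {t0..}"
  then have "(F x has_vector_derivative pdt F x r) (at r within {0..})"
    using assms unfolding C1_bounded_def by auto
  then show "(F x has_vector_derivative pdt F x r) (at r within {t0..})"
    by (rule has_vector_derivative_within_subset) (use assms in auto)
  show "norm (pdt F x r) \<le> Lb"
    using assms \<open>r \<in> {t0..}\<close> unfolding C1_bounded_def by (auto intro: less_imp_le)
qed (use assms in auto)

lemma C1_bounded_lipschitz_coordinate:
  assumes C: "C1_bounded F D t0 Lb" and t: "t0 \<le> t"
    and segment: "\<And>h. \<bar>h\<bar> \<le> \<bar>d\<bar> \<Longrightarrow> z + h *\<^sub>R axis i 1 \<in> D"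
  shows "norm (F (z + d *\<^sub>R axis i 1) t - F z t) \<le> Lb * \<bar>d\<bar>"
proof -
  let ?g = "\<lambda>h. F (z + h *\<^sub>R axis i 1) t"
  let ?g' = "\<lambda>h. pdx i (\<lambda>x. F x t) (z + h *\<^sub>R axis i 1)"
  have "norm (?g d - ?g 0) \<le> Lb * \<bar>d - 0\<bar>"
  proof (rule norm_diff_le_of_vector_derivative_bound[where S="{-\<bar>d\<bar>..\<bar>d\<bar>}"])
    fix h assume "h \<in> {-\<bar>d\<bar>..\<bar>d\<bar>}"
    then have x: "z + h *\<^sub>R axis i 1 \<in> D" using segment by auto
    then have "((\<lambda>k. F ((z + h *\<^sub>R axis i 1) + k *\<^sub>R axis i 1) t) has_vector_derivative ?g' h) (at 0)"
      using C t unfolding C1_bounded_def by auto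
    then have "((\<lambda>k. F ((z + h *\<^sub>R axis i 1) + k *\<^sub>R axis i 1) t) \<circ> (\<lambda>k. k - h)
        has_vector_derivative 1 *\<^sub>R ?g' h) (at h)"
      by (intro vector_diff_chain_at) (auto intro!: derivative_eq_intros)
    moreover have "(\<lambda>k. F ((z + h *\<^sub>R axis i 1) + k *\<^sub>R axis i 1) t) \<circ> (\<lambda>k. k - h) = ?g"
      by (simp add: fun_eq_iff algebra_simps)
    ultimately show "(?g has_vector_derivative ?g' h) (at h within {-\<bar>d\<bar>..\<bar>d\<bar>})"
      by (simp add: has_vector_derivative_at_within)
    show "norm (?g' h) \<le> Lb"
      using C1_bounded_pdx_bound[OF C x t] by (simp add: less_imp_le)
  qed auto
  then show ?thesis by simp
qed

text \<open>D need not be convex, so x and x' are joined by a path along the coordinate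
  directions; it stays in the ball because each of its points is componentwise dominated by x' - x.\<close>

lemma C1_bounded_lipschitz_l1:
  fixes x x' :: "real^'n::finite"
  assumes C: "C1_bounded F D t0 Lb" and t: "t0 \<le> t"
    and ball: "ball x r \<subseteq> D" and near: "norm (x' - x) < r"
  shows "norm (F x' t - F x t) \<le> Lb * (\<Sum>i\<in>UNIV. \<bar>(x' - x) $ i\<bar>)"
proof -
  define v where "v S = (\<Sum>i\<in>S. (x' - x) $ i *\<^sub>R axis i (1::real))" for S
  have v_component: "v S $ j = (if j \<in> S then (x' - x) $ j else 0)" if "finite S" for S j
    using that by (simp add: v_def sum_component axis_def if_distrib cong: if_cong)
  have partial: "norm (F (x + v S) t - F x t) \<le> Lb * (\<Sum>i\<in>S. \<bar>(x' - x) $ i\<bar>)" if "finite S" for S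
    using that
  proof (induction S rule: finite_induct)
    case empty
    then show ?case by (simp add: v_def)
  next
    case (insert i S)
    have "x + v S + h *\<^sub>R axis i 1 \<in> D" if h: "\<bar>h\<bar> \<le> \<bar>(x' - x) $ i\<bar>" for h
    proof -
      have "norm (v S + h *\<^sub>R axis i 1) \<le> norm (x' - x)"
      proof (rule norm_le_componentwise_cart)
        fix j
        show "norm ((v S + h *\<^sub>R axis i 1) $ j) \<le> norm ((x' - x) $ j)"
          using h insert.hyps by (cases "j = i") (simp_all add: v_component axis_def)
      qed
      moreover have "dist x (x + (v S + h *\<^sub>R axis i 1)) = norm (v S + h *\<^sub>R axis i 1)"
        by (metis add_diff_cancel_left' dist_commute dist_norm)
      ultimately have "x + v S + h *\<^sub>R axis i 1 \<in> ball x r"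
        using near by (simp add: add.assoc)
      then show ?thesis using ball by blast
    qed
    then have "norm (F (x + v S + (x' - x) $ i *\<^sub>R axis i 1) t - F (x + v S) t)
        \<le> Lb * \<bar>(x' - x) $ i\<bar>"
      by (intro C1_bounded_lipschitz_coordinate[OF C t])
    moreover have "x + v (insert i S) = x + v S + (x' - x) $ i *\<^sub>R axis i 1"
      using insert.hyps by (simp add: v_def algebra_simps)
    ultimately have "norm (F (x + v (insert i S)) t - F (x + v S) t) \<le> Lb * \<bar>(x' - x) $ i\<bar>"
      by metis
    from norm_diff_triangle_le[OF this insert.IH] show ?case
      using insert.hyps by (simp add: distrib_left)
  qed
  have "x + v UNIV = x'"
    by (simp add: vec_eq_iff v_component)
  then show ?thesis
    using partial[of UNIV] by simp
qed

lemma C1_bounded_lipschitz_space: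
  fixes x x' :: "real^'n::finite" and Lb :: real
  assumes C: "C1_bounded F D t0 Lb" and t: "t0 \<le> t"
    and ball: "ball x r \<subseteq> D" and near: "norm (x' - x) < r"
  shows "norm (F x' t - F x t) \<le> CARD('n) * Lb * norm (x' - x)"
proof -
  have "norm (F x' t - F x t) \<le> Lb * (\<Sum>i\<in>UNIV. \<bar>(x' - x) $ i\<bar>)"
    by (rule C1_bounded_lipschitz_l1[OF assms])
  also have "\<dots> \<le> Lb * (\<Sum>i\<in>(UNIV::'n set). norm (x' - x))"
  proof (intro mult_left_mono sum_mono component_le_norm_cart)
    show "0 \<le> Lb"
      using C1_bounded_pos[OF C _ t] ball near
      by (meson centre_in_ball le_less_trans norm_ge_zero subsetD less_imp_le)
  qed
  finally show ?thesis
    by (simp add: algebra_simps)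
qed

lemma C1_bounded_local_lipschitz:
  fixes x x' :: "real^'n::finite" and Lb :: real
  assumes C: "C1_bounded F D t0 Lb" and "0 \<le> t0" "t0 \<le> s" "t0 \<le> s'"
    and ball: "ball x r \<subseteq> D" and near: "norm (x' - x) < r"
  shows "norm (F x' s' - F x s) \<le> CARD('n) * Lb * norm (x' - x) + Lb * \<bar>s' - s\<bar>"
proof -
  have "norm (F x' s' - F x s') \<le> CARD('n) * Lb * norm (x' - x)"
    using C1_bounded_lipschitz_space[OF C _ ball near] assms by blast
  moreover have "x \<in> D"
    using ball near by (meson centre_in_ball le_less_trans norm_ge_zero subsetD)
  then have "norm (F x s' - F x s) \<le> Lb * \<bar>s' - s\<bar>"
    using C1_bounded_lipschitz_time[OF C] assms by blast
  ultimately show ?thesis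
    by (rule norm_diff_triangle_le)
qed

lemma continuous_on_C1_bounded_along_curve:
  fixes y :: "real \<Rightarrow> real^'n::finite"
  assumes C: "C1_bounded F D t0 Lb" and "0 \<le> t0" and "open D"
    and y: "continuous_on {t0..<T} y" "y ` {t0..<T} \<subseteq> D"
  shows "continuous_on {t0..<T} (\<lambda>s. F (y s) s)"
  unfolding continuous_on_def
proof
  fix s assume s: "s \<in> {t0..<T}"
  let ?I = "at s within {t0..<T}"
  obtain r where r: "0 < r" "ball (y s) r \<subseteq> D"
    using \<open>open D\<close> y s open_contains_ball by blast
  have y_lim: "((\<lambda>s'. y s' - y s) \<longlongrightarrow> 0) ?I"
    using y(1) s by (simp add: continuous_on_def LIM_zero)
  have "\<forall>\<^sub>F s' in ?I. norm (y s' - y s) < r"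
    using y_lim r(1) by (simp add: tendsto_iff dist_norm)
  moreover have "\<forall>\<^sub>F s' in ?I. s' \<in> {t0..<T}"
    by (simp add: eventually_at_filter)
  ultimately have "\<forall>\<^sub>F s' in ?I.
      norm (F (y s') s' - F (y s) s) \<le> CARD('n) * Lb * norm (y s' - y s) + Lb * \<bar>s' - s\<bar>"
    by eventually_elim (use C1_bounded_local_lipschitz[OF C] assms s r in auto)
  moreover have "((\<lambda>s'. CARD('n) * Lb * norm (y s' - y s) + Lb * \<bar>s' - s\<bar>) \<longlongrightarrow> 0) ?I"
    using tendsto_add[OF tendsto_mult_right_zero[OF tendsto_norm_zero[OF y_lim]]
        tendsto_mult_right_zero[OF tendsto_rabs_zero[OF LIM_zero[OF tendsto_ident_at]]]]
    by simp
  ultimately show "((\<lambda>s. F (y s) s) \<longlongrightarrow> F (y s) s) ?I"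
    by (rule Lim_null_comparison[THEN LIM_zero_cancel])
qed

lemma norm_diff_le_of_local_lipschitz:
  fixes h :: "real \<Rightarrow> 'a::real_normed_vector"
  assumes "p \<le> q" "0 < \<epsilon>"
    and local: "\<And>s s'. p \<le> s \<Longrightarrow> s \<le> s' \<Longrightarrow> s' \<le> q \<Longrightarrow> s' - s < \<epsilon>
      \<Longrightarrow> norm (h s' - h s) \<le> L * (s' - s)"
  shows "norm (h q - h p) \<le> L * (q - p)"
proof -
  obtain N :: nat where N: "q - p < N * \<epsilon>"
    using ex_less_of_nat_mult[OF \<open>0 < \<epsilon>\<close>] by blast
  then have "0 < N"
    using \<open>p \<le> q\<close> by (cases N) auto
  define d where "d = (q - p) / N"
  have "0 \<le> d"
    using \<open>p \<le> q\<close> by (simp add: d_def)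
  define s where "s k = p + k * d" for k :: nat
  have step: "norm (h (s (Suc k)) - h (s k)) \<le> L * d" if "k < N" for k
  proof -
    have "real (Suc k) * d \<le> N * d"
      using that \<open>0 \<le> d\<close> by (intro mult_right_mono) auto
    then have "s (Suc k) \<le> q"
      using \<open>0 < N\<close> by (simp add: s_def d_def)
    moreover have "s (Suc k) - s k = d"
      by (simp add: s_def distrib_right)
    moreover have "d < \<epsilon>"
      using N \<open>0 < N\<close> by (simp add: d_def field_simps)
    ultimately show ?thesis
      using local[of "s k" "s (Suc k)"] \<open>0 \<le> d\<close> by (simp add: s_def)
  qed
  have "s 0 = p" "s N = q"
    using \<open>0 < N\<close> by (simp_all add: s_def d_def)
  then have "norm (h q - h p) = norm (\<Sum>k<N. h (s (Suc k)) - h (s k))"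
    using sum_lessThan_telescope[where f="\<lambda>k. h (s k)"] by simp
  also have "\<dots> \<le> (\<Sum>k<N. norm (h (s (Suc k)) - h (s k)))"
    by (rule norm_sum)
  also have "\<dots> \<le> (\<Sum>k<N. L * d)"
    using step by (intro sum_mono) simp
  also have "\<dots> = L * (q - p)"
    using \<open>0 < N\<close> by (simp add: d_def)
  finally show ?thesis .
qed

lemma C1_bounded_lipschitz_along_curve:
  fixes y :: "real \<Rightarrow> real^'n::finite" and Lb :: real
  assumes C: "C1_bounded F D t0 Lb" and "0 \<le> t0" and "open D"
    and "t0 \<le> p" "p \<le> q"
    and y: "continuous_on {p..q} y" "y ` {p..q} \<subseteq> D"
    and y_lipschitz: "\<And>s s'. p \<le> s \<Longrightarrow> s \<le> s' \<Longrightarrow> s' \<le> q \<Longrightarrow> norm (y s' - y s) \<le> L * (s' - s)"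
  shows "norm (F (y q) q - F (y p) p) \<le> (CARD('n) * Lb * L + Lb) * (q - p)"
proof -
  obtain r where r: "0 < r" "(\<Union>x\<in>y ` {p..q}. ball x r) \<subseteq> D"
    using compact_subset_open_imp_ball_epsilon_subset[OF compact_continuous_image[OF y(1)]]
      \<open>open D\<close> y(2) by blast
  show ?thesis
  proof (rule norm_diff_le_of_local_lipschitz[where \<epsilon>="r / (\<bar>L\<bar> + 1)"])
    fix s s' assume s: "p \<le> s" "s \<le> s'" "s' \<le> q" "s' - s < r / (\<bar>L\<bar> + 1)"
    have "L * (s' - s) \<le> (\<bar>L\<bar> + 1) * (s' - s)"
      using s by (intro mult_right_mono) auto
    also have "\<dots> < r"
      using s by (simp add: field_simps)
    finally have y_near: "norm (y s' - y s) \<le> L * (s' - s)" "norm (y s' - y s) < r"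
      using y_lipschitz[OF s(1-3)] by auto
    have "y s \<in> y ` {p..q}"
      using s by auto
    then have "ball (y s) r \<subseteq> D"
      using r(2) by blast
    then have "norm (F (y s') s' - F (y s) s) \<le> CARD('n) * Lb * norm (y s' - y s) + Lb * \<bar>s' - s\<bar>"
      using C1_bounded_local_lipschitz[OF C \<open>0 \<le> t0\<close> _ _ \<open>ball (y s) r \<subseteq> D\<close> y_near(2), of s s']
        \<open>t0 \<le> p\<close> s by simp
    also have "\<dots> \<le> CARD('n) * Lb * (L * (s' - s)) + Lb * (s' - s)"
    proof -
      have "0 < Lb"
        using C1_bounded_pos[OF C, of "y s" s] \<open>ball (y s) r \<subseteq> D\<close> r(1) \<open>t0 \<le> p\<close> s
        by (meson centre_in_ball order_trans subsetD)
      then show ?thesis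
        using y_near(1) s by (intro add_mono mult_left_mono) auto
    qed
    finally show "norm (F (y s') s' - F (y s) s) \<le> (CARD('n) * Lb * L + Lb) * (s' - s)"
      by (simp add: algebra_simps)
  qed (use assms r in auto)
qed

section \<open>The weakly singular kernel\<close>

lemma has_integral_singular_kernel:
  fixes c c1 :: real
  assumes "p \<le> q" "q \<le> t"
  shows "((\<lambda>s. c1 + c / sqrt (t - s)) has_integral c1 * (q - p) + 2 * c * (sqrt (t - p) - sqrt (t - q))) {p..q}"
proof -
  define F where "F s = c1 * s - 2 * c * sqrt (t - s)" for s
  have "((\<lambda>s. c1 + c / sqrt (t - s)) has_integral F q - F p) {p..q}"
  proof (rule fundamental_theorem_of_calculus_interior[OF \<open>p \<le> q\<close>])
    show "continuous_on {p..q} F"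
      unfolding F_def by (intro continuous_intros)
    fix s assume "s \<in> {p<..<q}"
    then have "0 < t - s"
      using assms by auto
    then show "(F has_vector_derivative c1 + c / sqrt (t - s)) (at s)"
      unfolding F_def has_real_derivative_iff_has_vector_derivative[symmetric]
      by (auto intro!: derivative_eq_intros simp: field_simps)
  qed
  then show ?thesis
    by (simp add: F_def algebra_simps)
qed

lemma norm_integral_le_singular_kernel:
  fixes G :: "real \<Rightarrow> 'a::banach"
  assumes "(G has_integral I) {p..q}" "p \<le> q" "q \<le> t" "0 \<le> c" "0 \<le> P"
    and "\<And>s. s \<in> {p..q} \<Longrightarrow> norm (G s) \<le> (c1 + c / sqrt (t - s)) * P"
  shows "norm I \<le> P * (c1 * (q - p) + 2 * c * sqrt (q - p))"
proof -
  have kernel: "((\<lambda>s. (c1 + c / sqrt (t - s)) * P) has_integral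
      (c1 * (q - p) + 2 * c * (sqrt (t - p) - sqrt (t - q))) * P) {p..q}"
    using has_integral_singular_kernel[OF assms(2,3)] by (rule has_integral_mult_left)
  have "norm (integral {p..q} G) \<le> integral {p..q} (\<lambda>s. (c1 + c / sqrt (t - s)) * P)"
    using assms(1,6) kernel by (intro integral_norm_bound_integral) auto
  then have "norm I \<le> (c1 * (q - p) + 2 * c * (sqrt (t - p) - sqrt (t - q))) * P"
    by (simp only: integral_unique[OF assms(1)] integral_unique[OF kernel])
  also have "\<dots> \<le> (c1 * (q - p) + 2 * c * sqrt (q - p)) * P"
  proof -
    have "sqrt (t - p) \<le> sqrt (t - q) + sqrt (q - p)"
      using sqrt_add_le_add_sqrt[of "t - q" "q - p"] assms(2,3) by simp
    then show ?thesis
      using assms(4,5) by (intro mult_right_mono add_left_mono mult_left_mono) auto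
  qed
  finally show ?thesis
    by (simp add: mult.commute)
qed

lemma small_interval_for_affine_sqrt:
  fixes \<alpha> \<beta> :: real
  assumes "0 \<le> \<alpha>" "0 \<le> \<beta>"
  obtains \<delta> where "0 < \<delta>" "\<And>d. 0 \<le> d \<Longrightarrow> d \<le> \<delta> \<Longrightarrow> \<alpha> * d + \<beta> * sqrt d \<le> 1 / 2"
proof
  define \<delta> where "\<delta> = min (1 / (4 * (\<alpha> + 1))) ((1 / (4 * (\<beta> + 1)))\<^sup>2)"
  show "0 < \<delta>"
    using assms by (simp add: \<delta>_def)
  fix d :: real assume d: "0 \<le> d" "d \<le> \<delta>"
  have "\<alpha> * d \<le> (\<alpha> + 1) * (1 / (4 * (\<alpha> + 1)))"
    using assms d by (intro mult_mono) (auto simp: \<delta>_def)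
  also have "\<dots> = 1 / 4"
    using assms by simp
  finally have "\<alpha> * d \<le> 1 / 4" .
  have "sqrt d \<le> 1 / (4 * (\<beta> + 1))"
    using d assms real_sqrt_le_mono[of d "(1 / (4 * (\<beta> + 1)))\<^sup>2"] by (simp add: \<delta>_def)
  then have "\<beta> * sqrt d \<le> (\<beta> + 1) * (1 / (4 * (\<beta> + 1)))"
    using assms d by (intro mult_mono) auto
  also have "\<dots> = 1 / 4"
    using assms by simp
  finally show "\<alpha> * d + \<beta> * sqrt d \<le> 1 / 2"
    using \<open>\<alpha> * d \<le> 1 / 4\<close> by simp
qed

section \<open>Bounds by short time steps\<close>

lemma bound_extends_by_short_step:
  fixes \<phi> :: "real \<Rightarrow> real"
  assumes "continuous_on {t0..<T} \<phi>" "t0 \<le> a"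
    and step: "\<And>a t P Q. t0 \<le> a \<Longrightarrow> a \<le> t \<Longrightarrow> t < T \<Longrightarrow> t - a \<le> \<delta>
      \<Longrightarrow> (\<forall>s\<in>{t0..a}. \<phi> s \<le> P) \<Longrightarrow> (\<forall>s\<in>{t0..t}. \<phi> s \<le> Q) \<Longrightarrow> \<phi> t \<le> C + E * P + Q / 2"
    and S: "\<forall>t\<in>{t0..<T}. t \<le> a \<longrightarrow> \<phi> t \<le> S"
    and t: "t \<in> {t0..<T}" "t \<le> a + \<delta>"
  shows "\<phi> t \<le> max S (2 * C + 2 * E * S)"
proof -
  have "{t0..t} \<subseteq> {t0..<T}" "{t0..t} \<noteq> {}"
    using t by auto
  then obtain s where s: "s \<in> {t0..t}" "\<forall>r\<in>{t0..t}. \<phi> r \<le> \<phi> s"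
    using continuous_attains_sup[OF compact_Icc _ continuous_on_subset[OF assms(1)]] by metis
  have "s < T"
    using s t by simp
  have "\<phi> s \<le> max S (2 * C + 2 * E * S)"
  proof (cases "s \<le> a")
    case True
    then have "\<phi> s \<le> S"
      using S s(1) \<open>s < T\<close> by auto
    then show ?thesis
      by simp
  next
    case False
    have "\<forall>r\<in>{t0..a}. \<phi> r \<le> S"
      using S False s t by simp
    moreover have "\<forall>r\<in>{t0..s}. \<phi> r \<le> \<phi> s"
      using s by auto
    ultimately have "\<phi> s \<le> C + E * S + \<phi> s / 2"
      using step[of a s S "\<phi> s"] \<open>t0 \<le> a\<close> False s t by simp
    then show ?thesis
      by simp
  qed
  moreover have "\<phi> t \<le> \<phi> s"
    using s(2) t(1) by simp
  ultimately show ?thesis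
    by linarith
qed

lemma bounded_by_short_steps:
  fixes \<phi> :: "real \<Rightarrow> real"
  assumes "continuous_on {t0..<T} \<phi>" "0 < \<delta>"
    and step: "\<And>a t P Q. t0 \<le> a \<Longrightarrow> a \<le> t \<Longrightarrow> t < T \<Longrightarrow> t - a \<le> \<delta>
      \<Longrightarrow> (\<forall>s\<in>{t0..a}. \<phi> s \<le> P) \<Longrightarrow> (\<forall>s\<in>{t0..t}. \<phi> s \<le> Q) \<Longrightarrow> \<phi> t \<le> C + E * P + Q / 2"
  shows "\<exists>S. \<forall>t\<in>{t0..<T}. \<phi> t \<le> S"
proof -
  have "\<exists>S. \<forall>t\<in>{t0..<T}. t \<le> t0 + k * \<delta> \<longrightarrow> \<phi> t \<le> S" for k :: nat
  proof (induction k)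
    case 0
    show ?case
      by (intro exI[of _ "\<phi> t0"]) auto
  next
    case (Suc k)
    then obtain S where S: "\<forall>t\<in>{t0..<T}. t \<le> t0 + k * \<delta> \<longrightarrow> \<phi> t \<le> S"
      by blast
    have "t0 \<le> t0 + k * \<delta>"
      using \<open>0 < \<delta>\<close> by simp
    then have "\<phi> t \<le> max S (2 * C + 2 * E * S)" if "t \<in> {t0..<T}" "t \<le> t0 + k * \<delta> + \<delta>" for t
      by (rule bound_extends_by_short_step[OF assms(1) _ _ S that]) (rule step)
    then show ?case
      by (intro exI[of _ "max S (2 * C + 2 * E * S)"]) (simp add: algebra_simps)
  qed
  moreover obtain k :: nat where "T - t0 < k * \<delta>"
    using ex_less_of_nat_mult[OF \<open>0 < \<delta>\<close>] by blast
  ultimately show ?thesis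
    by (metis atLeastLessThan_iff diff_less_eq add.commute less_eq_real_def less_trans)
qed

section \<open>Solutions of the integrated Maxey--Riley system\<close>

text \<open>Assumption (*) controls A_u but not u.  If the partial derivatives of u exist, so do those
  of its Laplacian and the column of M_u is the partial derivative of A_u; otherwise both
  vector_derivative terms of M_u are the junk value SOME v. False.\<close>

lemma column_M_u_cases:
  fixes u :: "real^'n::finite \<Rightarrow> real \<Rightarrow> real^'n"
  assumes C: "C1_bounded (A_u u \<gamma> \<mu>) D t0 Lb" and "x \<in> D" "t0 \<le> t" "\<gamma> \<noteq> 0" "\<mu> \<noteq> 0"
  shows "column k (M_u u \<gamma> \<mu> x t) \<in> {pdx k (\<lambda>z. A_u u \<gamma> \<mu> z t) x, (1 + \<gamma> / 6 / \<mu>) *\<^sub>R (SOME v. False)}"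
proof -
  define c where "c = \<gamma> / 6 / \<mu>"
  have "c \<noteq> 0"
    using assms(4,5) by (simp add: c_def)
  define U where "U = (\<lambda>h. u (x + h *\<^sub>R axis k 1) t)"
  define L where "L = (\<lambda>h. lap u (x + h *\<^sub>R axis k 1) t)"
  define P where "P = pdx k (\<lambda>z. A_u u \<gamma> \<mu> z t) x"
  have A_deriv: "((\<lambda>h. U h + c *\<^sub>R L h) has_vector_derivative P) (at 0)"
    using C assms(2,3) unfolding C1_bounded_def by (auto simp: U_def L_def P_def A_u_def c_def)
  have column: "column k (M_u u \<gamma> \<mu> x t) = vector_derivative U (at 0) + c *\<^sub>R vector_derivative L (at 0)"
    by (simp add: M_u_def column_def jac_def pdx_def U_def L_def c_def vec_eq_iff)
  show ?thesis
  proof (cases "U differentiable at 0")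
    case True
    then obtain DU where DU: "(U has_vector_derivative DU) (at 0)"
      by (auto simp: vector_derivative_works)
    have "((\<lambda>h. (1 / c) *\<^sub>R ((U h + c *\<^sub>R L h) - U h)) has_vector_derivative (1 / c) *\<^sub>R (P - DU)) (at 0)"
      by (intro bounded_linear.has_vector_derivative[OF bounded_linear_scaleR_right] has_vector_derivative_diff A_deriv DU)
    then have "(L has_vector_derivative (1 / c) *\<^sub>R (P - DU)) (at 0)"
      using \<open>c \<noteq> 0\<close> by simp
    then have "column k (M_u u \<gamma> \<mu> x t) = P"
      using column vector_derivative_at[OF DU] \<open>c \<noteq> 0\<close> by (simp add: vector_derivative_at)
    then show ?thesis by (simp add: P_def)
  next
    case False
    have "\<not> L differentiable at 0"
    proof
      assume "L differentiable at 0"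
      then obtain DL where "(L has_vector_derivative DL) (at 0)"
        by (auto simp: vector_derivative_works)
      then have "((\<lambda>h. (U h + c *\<^sub>R L h) - c *\<^sub>R L h) has_vector_derivative P - c *\<^sub>R DL) (at 0)"
        by (intro bounded_linear.has_vector_derivative[OF bounded_linear_scaleR_right] has_vector_derivative_diff A_deriv)
      then show False
        using False by (auto simp: vector_derivative_works[symmetric] differentiable_def has_vector_derivative_def)
    qed
    then have "vector_derivative U (at 0) = (SOME v. False)" "vector_derivative L (at 0) = (SOME v. False)"
      using False by (simp_all add: vector_derivative_def differentiable_def has_vector_derivative_def)
    then show ?thesis
      using column by (simp add: c_def scaleR_add_left)
  qed
qed

lemma norm_matrix_vector_mult_le_columns:
  fixes M :: "real^'n::finite^'m::finite" and E :: real
  assumes "\<And>k. norm (column k M) \<le> E"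
  shows "norm (M *v v) \<le> CARD('n) * E * norm v"
proof -
  have "norm (M *v v) = norm (\<Sum>k\<in>UNIV. v $ k *\<^sub>R column k M)"
    by (simp add: matrix_mult_sum scalar_mult_eq_scaleR)
  also have "\<dots> \<le> (\<Sum>k\<in>UNIV. \<bar>v $ k\<bar> * norm (column k M))"
    by (rule norm_sum[THEN order_trans]) simp
  also have "\<dots> \<le> (\<Sum>k\<in>(UNIV::'n set). norm v * E)"
    using assms by (intro sum_mono mult_mono) (auto simp: component_le_norm_cart)
  finally show ?thesis
    by (simp add: algebra_simps)
qed

lemma has_integral_increment:
  fixes f :: "real \<Rightarrow> 'a::banach"
  assumes primitive: "\<And>t. t \<in> {a..<b} \<Longrightarrow> (f has_integral (F t - F0)) {a..t}"
    and "a \<le> s" "s \<le> s'" "s' < b"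
  shows "(f has_integral (F s' - F s)) {s..s'}"
proof -
  have whole: "(f has_integral (F s' - F0)) {a..s'}"
    using primitive assms by simp
  then have "f integrable_on {s..s'}"
    using integrable_subinterval_real[OF has_integral_integrable[OF whole], of s s'] assms by auto
  then obtain I where I: "(f has_integral I) {s..s'}"
    by blast
  have "(f has_integral (F s - F0) + I) {a..s'}"
    using primitive[of s] assms by (intro has_integral_combine[OF _ _ _ I]) auto
  then have "(F s - F0) + I = F s' - F0"
    using whole by (rule has_integral_unique)
  then have "I = F s' - F s"
    by (simp add: algebra_simps eq_diff_eq)
  then show ?thesis
    using I by simp
qed

locale MR_trajectory =
  fixes u :: "real^'n::finite \<Rightarrow> real \<Rightarrow> real^'n" and D :: "(real^'n) set"
    and t0 T R \<mu> \<kappa> \<gamma> Lb :: real and g y0 w0 :: "real^'n" and y w :: "real \<Rightarrow> real^'n"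
  assumes open_D: "open D" and t0_nonneg: "0 \<le> t0" and t0_less_T: "t0 < T"
    and mu_pos: "0 < \<mu>" and kappa_pos: "0 < \<kappa>" and gamma_pos: "0 < \<gamma>"
    and assumption_star: "assumption_star u D t0 R \<mu> \<gamma> g Lb"
    and solution: "MR_solution u D t0 T R \<mu> \<kappa> \<gamma> g y0 w0 y w"
begin

abbreviation "A \<equiv> A_u u \<gamma> \<mu>"
abbreviation "B \<equiv> B_u u R \<gamma> \<mu> g"
abbreviation "M \<equiv> M_u u \<gamma> \<mu>"

definition w_integrand :: "real \<Rightarrow> real \<Rightarrow> real^'n" where
  "w_integrand t = (\<lambda>s. - \<mu> *\<^sub>R w s - M (y s) s *v w s - (\<kappa> * sqrt \<mu> / sqrt (t - s)) *\<^sub>R w s + B (y s) s)"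

definition state_norm :: "real \<Rightarrow> real" where
  "state_norm s = norm (w s) + norm (A (y s) s) + norm (B (y s) s)"

definition M_bound :: real where
  "M_bound = CARD('n) * (Lb + (1 + \<gamma> / 6 / \<mu>) * norm (SOME v :: real^'n. False))"

lemma C1_bounded_A: "C1_bounded A D t0 Lb"
  and C1_bounded_B: "C1_bounded B D t0 Lb"
  using assumption_star by (simp_all add: assumption_star_def)

lemma y_continuous: "continuous_on {t0..<T} y"
  and w_continuous: "continuous_on {t0..<T} w"
  and y_in_D: "y ` {t0..<T} \<subseteq> D"
  and y_has_integral: "t \<in> {t0..<T} \<Longrightarrow> ((\<lambda>s. w s + A (y s) s) has_integral (y t - y0)) {t0..t}"
  and w_has_integral: "t \<in> {t0..<T} \<Longrightarrow> (w_integrand t has_integral (w t - w0)) {t0..t}"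
  using solution by (simp_all add: MR_solution_def w_integrand_def)

lemma Lb_pos: "0 < Lb"
proof -
  have "y t0 \<in> D"
    using y_in_D t0_less_T by auto
  then show ?thesis
    using C1_bounded_pos[OF C1_bounded_A] by blast
qed

lemma state_norm_nonneg: "0 \<le> state_norm s"
  by (simp add: state_norm_def)

lemma state_norm_bound_nonneg:
  assumes "\<forall>s\<in>{p..q}. state_norm s \<le> P" "p \<le> q"
  shows "0 \<le> P"
  using assms state_norm_nonneg[of p] by (meson atLeastAtMost_iff order.refl order.trans)

lemma continuous_state_norm: "continuous_on {t0..<T} state_norm"
  unfolding state_norm_def
  using continuous_on_C1_bounded_along_curve[OF _ t0_nonneg open_D y_continuous y_in_D]
    C1_bounded_A C1_bounded_B w_continuous
  by (intro continuous_intros) auto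

lemma y_lipschitz:
  assumes "t0 \<le> p" "q < T" "\<forall>r\<in>{p..q}. state_norm r \<le> L" "p \<le> s" "s \<le> s'" "s' \<le> q"
  shows "norm (y s' - y s) \<le> L * (s' - s)"
proof -
  have "((\<lambda>r. w r + A (y r) r) has_integral (y s' - y s)) {s..s'}"
    using assms by (intro has_integral_increment[OF y_has_integral]) auto
  moreover have "0 \<le> L"
    using state_norm_bound_nonneg assms by (meson order.trans)
  moreover have "norm (w r + A (y r) r) \<le> L" if "r \<in> {s..s'}" for r
  proof -
    have "state_norm r \<le> L"
      using assms that by auto
    then show ?thesis
      using norm_triangle_ineq[of "w r" "A (y r) r"] norm_ge_zero[of "B (y r) r"]
      unfolding state_norm_def by linarith
  qed
  ultimately show ?thesis
    using has_integral_bound_real[of L "{}" _ "y s' - y s" s s'] assms(5) by simp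
qed

lemma norm_increment_along_trajectory:
  assumes "C1_bounded F D t0 Lb" "t0 \<le> p" "p \<le> q" "q < T" "\<forall>r\<in>{p..q}. state_norm r \<le> L"
  shows "norm (F (y q) q - F (y p) p) \<le> (CARD('n) * Lb * L + Lb) * (q - p)"
proof (rule C1_bounded_lipschitz_along_curve[OF assms(1) t0_nonneg open_D assms(2,3)])
  have "{p..q} \<subseteq> {t0..<T}"
    using assms by auto
  then show "continuous_on {p..q} y" "y ` {p..q} \<subseteq> D"
    using y_continuous y_in_D by (auto intro: continuous_on_subset)
  show "\<And>s s'. p \<le> s \<Longrightarrow> s \<le> s' \<Longrightarrow> s' \<le> q \<Longrightarrow> norm (y s' - y s) \<le> L * (s' - s)"
    using y_lipschitz assms by blast
qed

lemma norm_M_mult_le: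
  assumes "s \<in> {t0..<T}"
  shows "norm (M (y s) s *v v) \<le> M_bound * norm v"
proof -
  have "y s \<in> D" "t0 \<le> s"
    using y_in_D assms by auto
  have "norm (column k (M (y s) s)) \<le> Lb + (1 + \<gamma> / 6 / \<mu>) * norm (SOME v :: real^'n. False)"
    for k
  proof -
    have "0 < \<gamma> / 6 / \<mu>"
      using mu_pos gamma_pos by simp
    consider "column k (M (y s) s) = pdx k (\<lambda>z. A z s) (y s)"
      | "column k (M (y s) s) = (1 + \<gamma> / 6 / \<mu>) *\<^sub>R (SOME v. False)"
      using column_M_u_cases[OF C1_bounded_A \<open>y s \<in> D\<close> \<open>t0 \<le> s\<close>] mu_pos gamma_pos by force
    then show ?thesis
    proof cases
      case 1
      then show ?thesis
        using C1_bounded_pdx_bound[OF C1_bounded_A \<open>y s \<in> D\<close> \<open>t0 \<le> s\<close>] \<open>0 < \<gamma> / 6 / \<mu>\<close>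
        by (simp add: add_increasing2 less_imp_le)
    next
      case 2
      then show ?thesis
        using Lb_pos \<open>0 < \<gamma> / 6 / \<mu>\<close> by simp
    qed
  qed
  then show ?thesis
    unfolding M_bound_def by (rule norm_matrix_vector_mult_le_columns)
qed

lemma M_bound_nonneg: "0 \<le> M_bound"
  using Lb_pos mu_pos gamma_pos by (simp add: M_bound_def)

lemma norm_w_integrand_le:
  assumes "t0 \<le> s" "s \<le> t" "t < T"
  shows "norm (w_integrand t s) \<le> (\<mu> + M_bound + 1 + \<kappa> * sqrt \<mu> / sqrt (t - s)) * state_norm s"
proof -
  define k where "k = \<kappa> * sqrt \<mu> / sqrt (t - s)"
  have "0 \<le> k"
    using kappa_pos mu_pos assms by (simp add: k_def)
  have "norm (w_integrand t s) \<le> norm (\<mu> *\<^sub>R w s) + norm (M (y s) s *v w s) + norm (k *\<^sub>R w s) + norm (B (y s) s)"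
    using norm_triangle_ineq[of "- \<mu> *\<^sub>R w s - M (y s) s *v w s - k *\<^sub>R w s" "B (y s) s"]
      norm_triangle_ineq4[of "- \<mu> *\<^sub>R w s - M (y s) s *v w s" "k *\<^sub>R w s"]
      norm_triangle_ineq4[of "- \<mu> *\<^sub>R w s" "M (y s) s *v w s"]
    unfolding w_integrand_def k_def by simp
  also have "\<dots> \<le> \<mu> * norm (w s) + M_bound * norm (w s) + k * norm (w s) + norm (B (y s) s)"
    using norm_M_mult_le[of s "w s"] assms mu_pos \<open>0 \<le> k\<close> by simp
  also have "\<dots> \<le> (\<mu> + M_bound + 1 + k) * state_norm s"
    using mu_pos M_bound_nonneg \<open>0 \<le> k\<close>
      mult_left_mono[of "norm (w s)" "state_norm s" "\<mu> + M_bound + k"]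
    by (simp add: state_norm_def algebra_simps)
  finally show ?thesis
    by (simp add: k_def)
qed

lemma norm_integral_w_integrand_le:
  assumes "(w_integrand t has_integral I) {p..q}" "t0 \<le> p" "p \<le> q" "q \<le> t" "t < T"
    and "\<forall>s\<in>{p..q}. state_norm s \<le> P"
  shows "norm I \<le> P * ((\<mu> + M_bound + 1) * (q - p) + 2 * (\<kappa> * sqrt \<mu>) * sqrt (q - p))"
proof (rule norm_integral_le_singular_kernel[OF assms(1,3,4)])
  show "0 \<le> \<kappa> * sqrt \<mu>"
    using kappa_pos mu_pos by simp
  show "0 \<le> P"
    using state_norm_bound_nonneg assms(3,6) by blast
  fix s assume s: "s \<in> {p..q}"
  have "0 \<le> \<kappa> * sqrt \<mu> / sqrt (t - s)"
    using kappa_pos mu_pos s assms(4) by simp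
  then have "0 \<le> \<mu> + M_bound + 1 + \<kappa> * sqrt \<mu> / sqrt (t - s)"
    using mu_pos M_bound_nonneg by simp
  then show "norm (w_integrand t s) \<le> (\<mu> + M_bound + 1 + \<kappa> * sqrt \<mu> / sqrt (t - s)) * P"
    using norm_w_integrand_le[of s t] assms s by (force intro: order_trans mult_left_mono)
qed

lemma norm_w_le:
  assumes "t0 \<le> a" "a \<le> t" "t < T"
    and P: "\<forall>s\<in>{t0..a}. state_norm s \<le> P" and Q: "\<forall>s\<in>{t0..t}. state_norm s \<le> Q"
  shows "norm (w t) \<le> norm w0 + P * ((\<mu> + M_bound + 1) * (T - t0) + 2 * (\<kappa> * sqrt \<mu>) * sqrt (T - t0))
    + Q * ((\<mu> + M_bound + 1) * (t - a) + 2 * (\<kappa> * sqrt \<mu>) * sqrt (t - a))"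
proof -
  have whole: "(w_integrand t has_integral (w t - w0)) {t0..t}"
    using w_has_integral assms by simp
  then have "w_integrand t integrable_on {t0..a}" "w_integrand t integrable_on {a..t}"
    using integrable_subinterval_real[OF has_integral_integrable[OF whole]] assms by auto
  then obtain I1 I2 where I1: "(w_integrand t has_integral I1) {t0..a}"
    and I2: "(w_integrand t has_integral I2) {a..t}"
    by blast
  have "w t - w0 = I1 + I2"
    using has_integral_combine[OF assms(1,2) I1 I2] whole by (rule has_integral_unique[symmetric])
  then have "w t = w0 + (I1 + I2)"
    by (simp add: algebra_simps)
  then have "norm (w t) \<le> norm w0 + norm I1 + norm I2"
    using norm_triangle_ineq[of w0 "I1 + I2"] norm_triangle_ineq[of I1 I2] by simp
  moreover have "norm I1 \<le> P * ((\<mu> + M_bound + 1) * (a - t0) + 2 * (\<kappa> * sqrt \<mu>) * sqrt (a - t0))"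
    using norm_integral_w_integrand_le[OF I1] P assms by simp
  moreover have "\<dots> \<le> P * ((\<mu> + M_bound + 1) * (T - t0) + 2 * (\<kappa> * sqrt \<mu>) * sqrt (T - t0))"
  proof (intro mult_left_mono add_mono)
    show "0 \<le> P"
      using state_norm_bound_nonneg P assms(1) by blast
  qed (use assms mu_pos kappa_pos M_bound_nonneg in auto)
  moreover have "norm I2 \<le> Q * ((\<mu> + M_bound + 1) * (t - a) + 2 * (\<kappa> * sqrt \<mu>) * sqrt (t - a))"
    using norm_integral_w_integrand_le[OF I2] Q assms by simp
  ultimately show ?thesis
    by linarith
qed

lemma norm_along_trajectory_le:
  assumes "C1_bounded F D t0 Lb" "t0 \<le> a" "a \<le> t" "t < T" "\<forall>s\<in>{a..t}. state_norm s \<le> Q"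
  shows "norm (F (y t) t) \<le> norm (F (y a) a) + (CARD('n) * Lb * Q + Lb) * (t - a)"
  using norm_increment_along_trajectory[OF assms] norm_triangle_sub[of "F (y t) t" "F (y a) a"] by linarith

lemma state_norm_step:
  obtains \<delta> C E where "0 < \<delta>"
    and "\<And>a t P Q. t0 \<le> a \<Longrightarrow> a \<le> t \<Longrightarrow> t < T \<Longrightarrow> t - a \<le> \<delta>
      \<Longrightarrow> \<forall>s\<in>{t0..a}. state_norm s \<le> P \<Longrightarrow> \<forall>s\<in>{t0..t}. state_norm s \<le> Q
      \<Longrightarrow> state_norm t \<le> C + E * P + Q / 2"
proof -
  define K where "K = CARD('n) * Lb"
  define c1 where "c1 = \<mu> + M_bound + 1"
  define c where "c = \<kappa> * sqrt \<mu>"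
  have "0 \<le> 2 * K + c1" "0 \<le> 2 * c"
    using Lb_pos mu_pos kappa_pos M_bound_nonneg by (simp_all add: K_def c1_def c_def)
  then obtain \<delta> where \<delta>: "0 < \<delta>" "\<And>d. 0 \<le> d \<Longrightarrow> d \<le> \<delta> \<Longrightarrow> (2 * K + c1) * d + 2 * c * sqrt d \<le> 1 / 2"
    using small_interval_for_affine_sqrt by blast
  show thesis
  proof (rule that[OF \<delta>(1)])
    fix a t P Q
    assume at: "t0 \<le> a" "a \<le> t" "t < T" "t - a \<le> \<delta>"
      and P: "\<forall>s\<in>{t0..a}. state_norm s \<le> P" and Q: "\<forall>s\<in>{t0..t}. state_norm s \<le> Q"
    define d where "d = t - a"
    have "0 \<le> Q"
      using state_norm_bound_nonneg Q at by (meson order.trans)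
    have "state_norm a \<le> P"
      using P at(1) by simp
    then have "norm (A (y a) a) + norm (B (y a) a) \<le> P"
      using norm_ge_zero[of "w a"] unfolding state_norm_def by linarith
    moreover have "norm (A (y t) t) \<le> norm (A (y a) a) + (K * Q + Lb) * d"
      "norm (B (y t) t) \<le> norm (B (y a) a) + (K * Q + Lb) * d"
      using norm_along_trajectory_le[OF C1_bounded_A at(1-3)]
        norm_along_trajectory_le[OF C1_bounded_B at(1-3)] Q at
      by (simp_all add: K_def d_def)
    moreover have "norm (w t) \<le> norm w0 + P * (c1 * (T - t0) + 2 * c * sqrt (T - t0))
        + Q * (c1 * d + 2 * c * sqrt d)"
      using norm_w_le[OF at(1-3) P Q] by (simp add: c1_def c_def d_def)
    moreover have "Q * ((2 * K + c1) * d + 2 * c * sqrt d) \<le> Q / 2"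
      using mult_left_mono[OF \<delta>(2)[of d] \<open>0 \<le> Q\<close>] at by (simp add: d_def)
    moreover have "Lb * d \<le> Lb * (T - t0)"
      using Lb_pos at by (simp add: d_def)
    moreover have "Q * ((2 * K + c1) * d + 2 * c * sqrt d) + 2 * Lb * d
        = Q * (c1 * d + 2 * c * sqrt d) + 2 * ((K * Q + Lb) * d)"
      by (simp add: algebra_simps)
    ultimately show "state_norm t \<le> (norm w0 + 2 * Lb * (T - t0))
        + (1 + c1 * (T - t0) + 2 * c * sqrt (T - t0)) * P + Q / 2"
      unfolding state_norm_def by (simp add: algebra_simps)
  qed
qed

lemma state_norm_bounded: "\<exists>S. \<forall>t\<in>{t0..<T}. state_norm t \<le> S"
proof (rule state_norm_step)
  fix \<delta> C E
  assume "0 < \<delta>" and "\<And>a t P Q. t0 \<le> a \<Longrightarrow> a \<le> t \<Longrightarrow> t < T \<Longrightarrow> t - a \<le> \<delta>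
      \<Longrightarrow> \<forall>s\<in>{t0..a}. state_norm s \<le> P \<Longrightarrow> \<forall>s\<in>{t0..t}. state_norm s \<le> Q
      \<Longrightarrow> state_norm t \<le> C + E * P + Q / 2"
  then show ?thesis
    by (rule bounded_by_short_steps[OF continuous_state_norm])
qed

lemma norm_w_le_of_state_norm_le:
  assumes "\<forall>t\<in>{t0..<T}. state_norm t \<le> S" "t \<in> {t0..<T}"
  shows "norm (w t) \<le> S"
proof -
  have "state_norm t \<le> S"
    using assms by blast
  then show ?thesis
    using norm_ge_zero[of "A (y t) t"] norm_ge_zero[of "B (y t) t"]
    unfolding state_norm_def by linarith
qed

lemma y_initial: "y t0 = y0"
proof -
  have "((\<lambda>s. w s + A (y s) s) has_integral (y t0 - y0)) {t0}"
    using y_has_integral[of t0] t0_less_T by simp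
  then have "y t0 - y0 = 0"
    using has_integral_refl(2) by (rule has_integral_unique)
  then show ?thesis
    by simp
qed

lemma norm_y_le_of_state_norm_le:
  assumes S: "\<forall>t\<in>{t0..<T}. state_norm t \<le> S" and t: "t \<in> {t0..<T}"
  shows "norm (y t) \<le> norm y0 + S * (T - t0)"
proof -
  have "norm (y t - y0) \<le> S * (t - t0)"
    using y_lipschitz[of t0 t S t0 t] S t by (simp add: y_initial)
  also have "\<dots> \<le> S * (T - t0)"
    using state_norm_bound_nonneg[of t0 t S] S t by (intro mult_left_mono) auto
  finally show ?thesis
    using norm_triangle_sub[of "y t" y0] by linarith
qed

end

theorem lemma3p7:
  fixes D :: "(real^'n::finite) set"
    and u :: "real^'n \<Rightarrow> real \<Rightarrow> real^'n"
    and g y0 w0 :: "real^'n"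
    and t0 T R \<mu> \<kappa> \<gamma> Lb :: real
    and y w :: "real \<Rightarrow> real^'n"
  assumes "open D" and "connected D"
    and "t0 \<ge> 0" and "R > 0" and "\<mu> > 0" and "\<kappa> > 0" and "\<gamma> > 0"
    and "assumption_star u D t0 R \<mu> \<gamma> g Lb"
    and "T > t0"
    and "MR_solution u D t0 T R \<mu> \<kappa> \<gamma> g y0 w0 y w"
  shows "\<exists>CY CW. (\<forall>t\<in>{t0..<T}. norm (y t) \<le> CY) \<and> (\<forall>t\<in>{t0..<T}. norm (w t) \<le> CW)"
proof -
  interpret MR_trajectory u D t0 T R \<mu> \<kappa> \<gamma> Lb g y0 w0 y w
    using assms by unfold_locales
  obtain S where "\<forall>t\<in>{t0..<T}. state_norm t \<le> S"
    using state_norm_bounded by blast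
  then show ?thesis
    using norm_y_le_of_state_norm_le norm_w_le_of_state_norm_le by blast
qed

end
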